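(* Let $\lambda>0$, $M>0$, $\ell>0$, $m>0$, $g>0$, $k>0$, and set $\omega^2=g/\ell$, $A=-\omega^2(1+m/M)$, $B=2\lambda\left(\frac{1}{M\ell}+\frac{1}{m\ell}\right)$. Consider the linear system $\dot y=Q y$ on $\mathbb{R}^8$, $y=(\theta_1,v_1,\theta_2,v_2,x_1,w_1,x_2,w_2)^T$, given by \[ \begin{aligned} \dot\theta_1&=v_1, & \dot v_1&=A\theta_1+Bv_1+\tfrac{k}{M\ell}x_1+\tfrac{2\rho}{M\ell}w_1-\tfrac{k}{M\ell}x_2,\\ \dot\theta_2&=v_2, & \dot v_2&=A\theta_2+Bv_2-\tfrac{k}{M\ell}x_1+\tfrac{k}{M\ell}x_2+\tfrac{2\rho}{M\ell}w_2,\\ \dot x_1&=w_1, & \dot w_1&=\tfrac{mg}{M}\theta_1-\tfrac{2\lambda}{M}v_1-\tfrac{k}{M}x_1-\tfrac{2\rho}{M}w_1+\tfrac{k}{M}x_2,\\ \dot x_2&=w_2, & \dot w_2&=\tfrac{mg}{M}\theta_2-\tfrac{2\lambda}{M}v_2+\tfrac{k}{M}x_1-\tfrac{k}{M}x_2-\tfrac{2\rho}{M}w_2, \end{aligned} \] and the piecewise-defined system (S) described in the context. Then, for every sufficiently small $\rho>0$, both systems have the line of fixed points $\{\theta_1=v_1=\theta_2=v_2=w_1=w_2=0,\ x_1=x_2\}$, and this line of fixed points is Lyapunov unstable for both systems.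
   Context: System (S) (two identical coupled pendulum clocks, small-amplitude model): with $f(\theta;\lambda,\tilde\theta)=-2\lambda$ if $|\theta|<\tilde\theta$ and $=2\lambda$ if $|\theta|\ge\tilde\theta$ ($\tilde\theta>0$), unknowns $\theta_1,\theta_2,x_1,x_2$ of $t$, \[ \begin{aligned} &\ddot\theta_1+\Big(\tfrac{1}{m\ell}+\tfrac{1}{M\ell}\Big)f(\theta_1;\lambda,\tilde\theta)\dot\theta_1+\omega^2\Big(1+\tfrac{m}{M}\Big)\theta_1-\tfrac{2\rho}{M\ell}\dot x_1=-\tfrac{k}{M\ell}(x_2-x_1),\\ &\ddot\theta_2+\Big(\tfrac{1}{m\ell}+\tfrac{1}{M\ell}\Big)f(\theta_2;\lambda,\tilde\theta)\dot\theta_2+\omega^2\Big(1+\tfrac{m}{M}\Big)\theta_2-\tfrac{2\rho}{M\ell}\dot x_2=\tfrac{k}{M\ell}(x_2-x_1),\\ &\ddot x_1-\tfrac{1}{M}f(\theta_1;\lambda,\tilde\theta)\dot\theta_1-\tfrac{m}{M}g\theta_1+\tfrac{2\rho}{M}\dot x_1=\tfrac{k}{M}(x_2-x_1),\\ &\ddot x_2-\tfrac{1}{M}f(\theta_2;\lambda,\tilde\theta)\dot\theta_2-\tfrac{m}{M}g\theta_2+\tfrac{2\rho}{M}\dot x_2=-\tfrac{k}{M}(x_2-x_1), \end{aligned} \] regarded as a first-order system in $(\theta_1,\dot\theta_1,\theta_2,\dot\theta_2,x_1,\dot x_1,x_2,\dot x_2)$. In the region $|\theta_1|,|\theta_2|<\tilde\theta$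 it coincides with the linear system $\dot y=Qy$ of the claim. Here $\theta_i$ are pendulum angles, $x_i$ attachment-point positions, $m$ pendulum mass, $\ell$ pendulum length, $M$ attachment mass, $k$ coupling stiffness, $\rho$ coupling damping, $g$ gravity. *)

theory Defs
  imports "HOL-Analysis.Analysis"
begin

text \<open>State vector y = (theta1, v1, theta2, v2, x1, w1, x2, w2) in R^8,
  represented as a nested product of reals (Euclidean norm).\<close>

type_synonym state = "real \<times> real \<times> real \<times> real \<times> real \<times> real \<times> real \<times> real"

definition linQ ::
  "real \<Rightarrow> real \<Rightarrow> real \<Rightarrow> real \<Rightarrow> real \<Rightarrow> real \<Rightarrow> real \<Rightarrow> state \<Rightarrow> state" where
  "linQ lam M l m g k rho =
     (\<lambda>(th1, v1, th2, v2, x1, w1, x2, w2).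
        let A = - (g / l) * (1 + m / M);
            B = 2 * lam * (1 / (M * l) + 1 / (m * l))
        in ( v1,
             A * th1 + B * v1 + k / (M * l) * x1 + 2 * rho / (M * l) * w1 - k / (M * l) * x2,
             v2,
             A * th2 + B * v2 - k / (M * l) * x1 + k / (M * l) * x2 + 2 * rho / (M * l) * w2,
             w1,
             m * g / M * th1 - 2 * lam / M * v1 - k / M * x1 - 2 * rho / M * w1 + k / M * x2,
             w2,
             m * g / M * th2 - 2 * lam / M * v2 + k / M * x1 - k / M * x2 - 2 * rho / M * w2))"

definition fsw :: "real \<Rightarrow> real \<Rightarrow> real \<Rightarrow> real" where
  "fsw lam tht th = (if \<bar>th\<bar> < tht then - 2 * lam else 2 * lam)"

text \<open>System (S) written as a first-order system, solved for the highest derivatives.\<close>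

definition sysS ::
  "real \<Rightarrow> real \<Rightarrow> real \<Rightarrow> real \<Rightarrow> real \<Rightarrow> real \<Rightarrow> real \<Rightarrow> real \<Rightarrow> state \<Rightarrow> state" where
  "sysS lam tht M l m g k rho =
     (\<lambda>(th1, v1, th2, v2, x1, w1, x2, w2).
        ( v1,
          - (1 / (m * l) + 1 / (M * l)) * fsw lam tht th1 * v1 - (g / l) * (1 + m / M) * th1
            + 2 * rho / (M * l) * w1 - k / (M * l) * (x2 - x1),
          v2,
          - (1 / (m * l) + 1 / (M * l)) * fsw lam tht th2 * v2 - (g / l) * (1 + m / M) * th2
            + 2 * rho / (M * l) * w2 + k / (M * l) * (x2 - x1),
          w1,
          1 / M * fsw lam tht th1 * v1 + m / M * g * th1 - 2 * rho / M * w1 + k / M * (x2 - x1),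
          w2,
          1 / M * fsw lam tht th2 * v2 + m / M * g * th2 - 2 * rho / M * w2 - k / M * (x2 - x1)))"

definition fixed_line :: "state set" where
  "fixed_line = {(0, 0, 0, 0, x, 0, x, 0) | x. True}"

definition fixed_points :: "(state \<Rightarrow> state) \<Rightarrow> state set" where
  "fixed_points F = {y. F y = 0}"

definition is_solution :: "(state \<Rightarrow> state) \<Rightarrow> state \<Rightarrow> real \<Rightarrow> (real \<Rightarrow> state) \<Rightarrow> bool" where
  "is_solution F y0 T y \<longleftrightarrow> 0 \<le> T \<and> y 0 = y0 \<and>
     (\<forall>t\<in>{0..T}. (y has_vector_derivative F (y t)) (at t within {0..T}))"

definition lyapunov_stable_set :: "(state \<Rightarrow> state) \<Rightarrow> state set \<Rightarrow> bool" where
  "lyapunov_stable_set F S \<longleftrightarrow>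
     (\<forall>\<epsilon>>0. \<exists>\<delta>>0. \<forall>y0 T y. infdist y0 S < \<delta> \<and> is_solution F y0 T y \<longrightarrow>
        (\<forall>t\<in>{0..T}. infdist (y t) S < \<epsilon>))"

end

theory Submission
  imports Defs
begin

(*
  Both vector fields vanish only where v1 = v2 = 0, and there the switching
  damping of system (S) is inactive, so (S) and the linear field Q have the same equilibria;
  the equations "zero torque, zero support force" of each clock then force theta_i = 0 and
  x1 = x2, i.e. the equilibria form the line L.

  For instability we look at the in-phase motion theta1 = theta2, x1 = x2 of the linear
  system.  It is governed by a cubic characteristic polynomial whose coefficients show
  (intermediate value theorem plus the quadratic formula) that for 0 < rho < rho0 it has a
  root mu with Re mu > 0.  The real part of e^(mu t) times the corresponding complex
  eigenvector is a solution of y' = Q y; rescaled, it starts arbitrarily close to L and, after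
  a whole number of periods of its rotating factor, has theta1 = h for a fixed h > 0, while
  theta1 vanishes on L.  As long as |theta_i| < tht the same curve solves (S), so choosing
  h < tht yields instability for both systems.
*)

(* System (S) coincides with Q wherever each pendulum is either inside the switching band
   or momentarily at rest: in both cases the term f(theta_i) v_i equals -2 lam v_i. *)
lemma sysS_eq_linQ:
  assumes "\<bar>th1\<bar> < tht \<or> v1 = 0" "\<bar>th2\<bar> < tht \<or> v2 = 0"
  shows "sysS lam tht M l m g k rho (th1, v1, th2, v2, x1, w1, x2, w2)
       = linQ lam M l m g k rho (th1, v1, th2, v2, x1, w1, x2, w2)"
  using assms by (auto simp: sysS_def linQ_def fsw_def Let_def algebra_simps diff_divide_distrib)

(* Equilibrium of one clock: zero torque on the pendulum and zero force on its support.
   Since l * torque + force = -g theta, only theta = 0 and spring stretch d = 0 remain. *)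
lemma pendulum_balance:
  fixes M l m g k th d :: real
  assumes "M > 0" "l > 0" "g > 0" "k > 0"
  shows "(- (g / l) * (1 + m / M) * th + k / (M * l) * d = 0 \<and> m * g / M * th - k / M * d = 0)
         \<longleftrightarrow> th = 0 \<and> d = 0"
proof (intro iffI; elim conjE)
  assume torque: "- (g / l) * (1 + m / M) * th + k / (M * l) * d = 0"
    and force: "m * g / M * th - k / M * d = 0"
  have "- g * th = l * (- (g / l) * (1 + m / M) * th + k / (M * l) * d) + (m * g / M * th - k / M * d)"
    using assms by (simp add: field_simps)
  then have "th = 0" using torque force assms by simp
  then show "th = 0 \<and> d = 0" using force assms by simp
qed simp

lemma fixed_points_linQ:
  assumes "M > 0" "l > 0" "g > 0" "k > 0"
  shows "fixed_points (linQ lam M l m g k rho) = fixed_line"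
proof (rule set_eqI)
  fix y :: state
  obtain th1 v1 th2 v2 x1 w1 x2 w2 where y: "y = (th1, v1, th2, v2, x1, w1, x2, w2)"
    by (cases y) auto
  have "linQ lam M l m g k rho y = 0 \<longleftrightarrow> v1 = 0 \<and> v2 = 0 \<and> w1 = 0 \<and> w2 = 0 \<and>
      (- (g / l) * (1 + m / M) * th1 + k / (M * l) * (x1 - x2) = 0 \<and> m * g / M * th1 - k / M * (x1 - x2) = 0) \<and>
      (- (g / l) * (1 + m / M) * th2 + k / (M * l) * (x2 - x1) = 0 \<and> m * g / M * th2 - k / M * (x2 - x1) = 0)"
    by (auto simp: linQ_def y Let_def zero_prod_def algebra_simps diff_divide_distrib)
  also have "\<dots> \<longleftrightarrow> y \<in> fixed_line"
    unfolding pendulum_balance[OF assms] by (auto simp: fixed_line_def y)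
  finally show "y \<in> fixed_points (linQ lam M l m g k rho) \<longleftrightarrow> y \<in> fixed_line"
    by (simp add: fixed_points_def)
qed

(* Every zero of either field has v1 = v2 = 0, where the two fields agree. *)
lemma fixed_points_sysS:
  "fixed_points (sysS lam tht M l m g k rho) = fixed_points (linQ lam M l m g k rho)"
proof (rule set_eqI)
  fix y :: state
  obtain th1 v1 th2 v2 x1 w1 x2 w2 where y: "y = (th1, v1, th2, v2, x1, w1, x2, w2)"
    by (cases y) auto
  have "sysS lam tht M l m g k rho y = 0 \<Longrightarrow> v1 = 0 \<and> v2 = 0"
    and "linQ lam M l m g k rho y = 0 \<Longrightarrow> v1 = 0 \<and> v2 = 0"
    by (simp_all add: sysS_def linQ_def Let_def y zero_prod_def)
  then show "y \<in> fixed_points (sysS lam tht M l m g k rho) \<longleftrightarrow> y \<in> fixed_points (linQ lam M l m g k rho)"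
    unfolding fixed_points_def y using sysS_eq_linQ by fastforce
qed

definition mode :: "complex \<Rightarrow> complex \<Rightarrow> real \<Rightarrow> real" where
  "mode \<mu> z t = Re (z * exp (of_real t * \<mu>))"

lemma mode_deriv: "(mode \<mu> z has_real_derivative mode \<mu> (z * \<mu>) t) (at t within S)"
proof -
  have "((\<lambda>t. exp (of_real t * \<mu>)) has_vector_derivative exp (of_real t * \<mu>) * \<mu>) (at t within S)"
    by (rule has_vector_derivative_real_field) (auto intro!: derivative_eq_intros)
  then have "((\<lambda>t. z * exp (of_real t * \<mu>)) has_vector_derivative z * (exp (of_real t * \<mu>) * \<mu>)) (at t within S)"
    by (rule has_vector_derivative_mult_right)
  then show ?thesis
    unfolding mode_def[abs_def] by (auto dest: has_field_derivative_Re simp: mult_ac)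
qed

lemma mode_bound: "\<bar>mode \<mu> 1 t\<bar> \<le> exp (Re \<mu> * t)"
  using abs_Re_le_cmod[of "exp (of_real t * \<mu>)"] by (simp add: mode_def mult.commute)

(* After whole multiples of a period of the rotating factor, e^(mu t) is the positive real
   number e^(Re mu t); this is where a growing mode is maximal. *)
lemma exp_period:
  obtains \<tau> :: real
  where "\<tau> > 0" "\<And>n::nat. exp (of_real (real n * \<tau>) * \<mu>) = of_real (exp (Re \<mu> * (real n * \<tau>)))"
proof -
  obtain \<tau> :: real where "\<tau> > 0" and period: "\<And>n::nat. cis (Im \<mu> * (real n * \<tau>)) = 1"
  proof (cases "Im \<mu> = 0")
    case True
    then show ?thesis by (intro that[of 1]) simp_all
  next
    case False
    have "cis (Im \<mu> * (real n * (2 * pi / \<bar>Im \<mu>\<bar>))) = 1" for n :: nat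
    proof -
      have "cis (2 * pi * real n) = 1" by (simp add: cis_multiple_2pi)
      then show ?thesis using False by (cases "Im \<mu> > 0") (simp_all add: mult_ac flip: cis_inverse)
    qed
    then show ?thesis using False by (intro that[of "2 * pi / \<bar>Im \<mu>\<bar>"]) simp_all
  qed
  have polar: "exp (of_real s * \<mu>) = of_real (exp (Re \<mu> * s)) * cis (Im \<mu> * s)" for s
    by (simp add: exp_eq_polar mult.commute)
  show ?thesis
    by (rule that[OF \<open>\<tau> > 0\<close>]) (simp only: polar period mult_1_right)
qed

lemma mode_add: "mode \<mu> (z + w) t = mode \<mu> z t + mode \<mu> w t"
  by (simp add: mode_def distrib_right)

lemma mode_diff: "mode \<mu> (z - w) t = mode \<mu> z t - mode \<mu> w t"
  by (simp add: mode_def left_diff_distrib)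

lemma mode_of_real_mult: "mode \<mu> (of_real a * z) t = a * mode \<mu> z t"
  by (simp add: mode_def mult.assoc)

lemma mode_of_real: "mode \<mu> (of_real a) t = a * mode \<mu> 1 t"
  using mode_of_real_mult[of \<mu> a 1] by simp

definition sym_mode :: "complex \<Rightarrow> complex \<Rightarrow> real \<Rightarrow> state" where
  "sym_mode \<mu> V t = (mode \<mu> 1 t, mode \<mu> \<mu> t, mode \<mu> 1 t, mode \<mu> \<mu> t,
                     mode \<mu> V t, mode \<mu> (V * \<mu>) t, mode \<mu> V t, mode \<mu> (V * \<mu>) t)"

lemma linQ_scaleR: "linQ lam M l m g k rho (c *\<^sub>R y) = c *\<^sub>R linQ lam M l m g k rho y"
  by (simp add: linQ_def Let_def algebra_simps split: prod.splits)

(* If (mu, V) solves the characteristic equations of the in-phase motion (pendulum equation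
   and support equation, where the spring force cancels since x1 = x2), every multiple of the
   in-phase mode solves y' = Q y. *)
lemma sym_mode_solves_linQ:
  assumes char_pendulum: "\<mu> * \<mu> = of_real (- (g / l) * (1 + m / M))
      + of_real (2 * lam * (1 / (M * l) + 1 / (m * l))) * \<mu> + of_real (2 * rho / (M * l)) * (V * \<mu>)"
    and char_support: "V * \<mu> * \<mu> = of_real (m * g / M) - of_real (2 * lam / M) * \<mu>
      - of_real (2 * rho / M) * (V * \<mu>)"
  shows "((\<lambda>t. C *\<^sub>R sym_mode \<mu> V t) has_vector_derivative
           linQ lam M l m g k rho (C *\<^sub>R sym_mode \<mu> V t)) (at t within S)"
proof -
  have "(sym_mode \<mu> V has_vector_derivative
      (mode \<mu> (1 * \<mu>) t, mode \<mu> (\<mu> * \<mu>) t, mode \<mu> (1 * \<mu>) t, mode \<mu> (\<mu> * \<mu>) t,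
       mode \<mu> (V * \<mu>) t, mode \<mu> (V * \<mu> * \<mu>) t, mode \<mu> (V * \<mu>) t, mode \<mu> (V * \<mu> * \<mu>) t))
      (at t within S)"
    unfolding sym_mode_def[abs_def]
    by (intro has_vector_derivative_Pair mode_deriv[unfolded has_real_derivative_iff_has_vector_derivative])
  also have "(mode \<mu> (1 * \<mu>) t, mode \<mu> (\<mu> * \<mu>) t, mode \<mu> (1 * \<mu>) t, mode \<mu> (\<mu> * \<mu>) t,
       mode \<mu> (V * \<mu>) t, mode \<mu> (V * \<mu> * \<mu>) t, mode \<mu> (V * \<mu>) t, mode \<mu> (V * \<mu> * \<mu>) t)
      = linQ lam M l m g k rho (sym_mode \<mu> V t)"
    unfolding char_pendulum char_support mult_1_left
    by (simp only: mode_add mode_diff mode_of_real_mult mode_of_real)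
      (simp add: linQ_def sym_mode_def Let_def algebra_simps)
  finally have "((\<lambda>t. C *\<^sub>R sym_mode \<mu> V t) has_vector_derivative
      C *\<^sub>R linQ lam M l m g k rho (sym_mode \<mu> V t)) (at t within S)"
    using has_vector_derivative_scaleR[OF DERIV_const] by simp
  then show ?thesis by (simp add: linQ_scaleR)
qed

lemma sym_mode_solves_sysS:
  assumes char_pendulum: "\<mu> * \<mu> = of_real (- (g / l) * (1 + m / M))
      + of_real (2 * lam * (1 / (M * l) + 1 / (m * l))) * \<mu> + of_real (2 * rho / (M * l)) * (V * \<mu>)"
    and char_support: "V * \<mu> * \<mu> = of_real (m * g / M) - of_real (2 * lam / M) * \<mu>
      - of_real (2 * rho / M) * (V * \<mu>)"
    and small: "0 \<le> C" "C * exp (Re \<mu> * t) < tht"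
  shows "((\<lambda>s. C *\<^sub>R sym_mode \<mu> V s) has_vector_derivative
           sysS lam tht M l m g k rho (C *\<^sub>R sym_mode \<mu> V t)) (at t within S)"
proof -
  have "\<bar>C * mode \<mu> 1 t\<bar> \<le> C * exp (Re \<mu> * t)"
    using mode_bound[of \<mu> t] small(1) by (simp add: abs_mult mult_left_mono)
  then have "\<bar>C * mode \<mu> 1 t\<bar> < tht" using small(2) by linarith
  then have "sysS lam tht M l m g k rho (C *\<^sub>R sym_mode \<mu> V t) = linQ lam M l m g k rho (C *\<^sub>R sym_mode \<mu> V t)"
    unfolding sym_mode_def by (simp add: sysS_eq_linQ)
  then show ?thesis using sym_mode_solves_linQ[OF char_pendulum char_support] by simp
qed

(* A real quadratic z^2 + b z + c with b < 0 has a root in the open right half plane: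
   (-b + csqrt (b^2 - 4c)) / 2 has real part at least -b/2. *)
lemma quadratic_root_right_half_plane:
  fixes b c :: real
  assumes "b < 0"
  shows "\<exists>z::complex. Re z > 0 \<and> z * z + of_real b * z + of_real c = 0"
proof -
  define D :: complex where "D = of_real (b * b - 4 * c)"
  define z where "z = (- of_real b + csqrt D) / 2"
  have "Re z \<ge> - b / 2" using Re_csqrt[of D] by (simp add: z_def)
  moreover have "4 * (z * z + of_real b * z + of_real c) = csqrt D * csqrt D - D"
    by (simp add: z_def D_def field_simps)
  then have "4 * (z * z + of_real b * z + of_real c) = 0"
    by (simp flip: power2_eq_square)
  then have "z * z + of_real b * z + of_real c = 0" by (metis mult_eq_0_iff zero_neq_numeral)
  ultimately show ?thesis using assms by (intro exI[of _ z]) auto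
qed

(* The cubic (s + r)(s^2 - B s + a) - e (p - q s) is negative at -r and positive at 0, so it
   has a real root s0 in [-r, 0]; the remaining quadratic factor has linear coefficient
   s0 + r - B < 0 and hence a root with positive real part. *)
lemma cubic_root_right_half_plane:
  fixes a B e p q r :: real
  assumes "e > 0" "p > 0" "q > 0" "r > 0" "r < B" "r * a - e * p > 0"
  shows "\<exists>\<mu>::complex. Re \<mu> > 0 \<and>
    (\<mu> + of_real r) * (\<mu> * \<mu> - of_real B * \<mu> + of_real a) = of_real e * (of_real p - of_real q * \<mu>)"
proof -
  define P where "P s = (s + r) * (s * s - B * s + a) - e * (p - q * s)" for s
  have "P (- r) \<le> 0" "0 \<le> P 0" using assms by (simp_all add: P_def)
  moreover have "continuous_on {- r..0} P" unfolding P_def by (intro continuous_intros)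
  ultimately obtain s0 where s0: "- r \<le> s0" "s0 \<le> 0" "P s0 = 0"
    using IVT'[of P "- r" 0 0] assms by auto
  define b where "b = s0 + r - B"
  define c where "c = a - r * B + e * q + s0 * b"
  have "b < 0" using s0 assms by (simp add: b_def)
  then obtain \<mu> :: complex where "Re \<mu> > 0" and root: "\<mu> * \<mu> + of_real b * \<mu> + of_real c = 0"
    using quadratic_root_right_half_plane by blast
  have "(\<mu> + of_real r) * (\<mu> * \<mu> - of_real B * \<mu> + of_real a) - of_real e * (of_real p - of_real q * \<mu>)
      = (\<mu> - of_real s0) * (\<mu> * \<mu> + of_real b * \<mu> + of_real c) + of_real (P s0)"
    by (simp add: P_def b_def c_def algebra_simps)
  then show ?thesis using \<open>Re \<mu> > 0\<close> root s0 by (intro exI[of _ \<mu>]) simp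
qed

(* For 0 < rho < lam (M + m) / (m l) the in-phase motion has a growing eigenvalue mu:
   eliminating V from the two characteristic equations gives the cubic above, with
   r = 2 rho / M < B and r a - e p = 2 rho g / (l M) > 0. *)
lemma growing_eigenpair:
  fixes lam M l m g rho :: real
  assumes "lam > 0" "M > 0" "l > 0" "m > 0" "g > 0" "rho > 0" "rho < lam * (M + m) / (m * l)"
  shows "\<exists>\<mu> V. Re \<mu> > 0 \<and>
    \<mu> * \<mu> = of_real (- (g / l) * (1 + m / M))
      + of_real (2 * lam * (1 / (M * l) + 1 / (m * l))) * \<mu> + of_real (2 * rho / (M * l)) * (V * \<mu>) \<and>
    V * \<mu> * \<mu> = of_real (m * g / M) - of_real (2 * lam / M) * \<mu> - of_real (2 * rho / M) * (V * \<mu>)"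
proof -
  define a where "a = (g / l) * (1 + m / M)"
  define B where "B = 2 * lam * (1 / (M * l) + 1 / (m * l))"
  define e where "e = 2 * rho / (M * l)"
  define p where "p = m * g / M"
  define q where "q = 2 * lam / M"
  define r where "r = 2 * rho / M"
  have "e > 0" "p > 0" "q > 0" "r > 0"
    unfolding e_def p_def q_def r_def using assms by simp_all
  moreover have "r < B"
    using assms unfolding r_def B_def by (simp add: field_simps)
  moreover have "r * a - e * p = 2 * rho * g / (l * M)"
    unfolding r_def a_def e_def p_def using assms by (simp add: field_simps)
  then have "r * a - e * p > 0" using assms by simp
  ultimately obtain \<mu> where "Re \<mu> > 0"
    and cubic: "(\<mu> + of_real r) * (\<mu> * \<mu> - of_real B * \<mu> + of_real a) = of_real e * (of_real p - of_real q * \<mu>)"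
    using cubic_root_right_half_plane by blast
  have "\<mu> \<noteq> 0" "(of_real e :: complex) \<noteq> 0" using \<open>Re \<mu> > 0\<close> \<open>e > 0\<close> by auto
  define V where "V = (\<mu> * \<mu> - of_real B * \<mu> + of_real a) / (of_real e * \<mu>)"
  have eV: "of_real e * (V * \<mu>) = \<mu> * \<mu> - of_real B * \<mu> + of_real a"
    unfolding V_def using \<open>\<mu> \<noteq> 0\<close> \<open>of_real e \<noteq> 0\<close> by simp
  have "of_real e * (V * \<mu> * (\<mu> + of_real r)) = (\<mu> + of_real r) * (of_real e * (V * \<mu>))"
    by (simp add: mult_ac)
  also have "\<dots> = of_real e * (of_real p - of_real q * \<mu>)"
    unfolding eV by (rule cubic)
  finally have "V * \<mu> * (\<mu> + of_real r) = of_real p - of_real q * \<mu>"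
    using \<open>of_real e \<noteq> 0\<close> by simp
  then show ?thesis using \<open>Re \<mu> > 0\<close> eV
    unfolding a_def B_def e_def p_def q_def r_def by (intro exI[of _ \<mu>] exI[of _ V] conjI) (auto simp: algebra_simps)
qed

(* theta1 vanishes on L, so |theta1| bounds the distance to L from below. *)
lemma abs_fst_le_infdist_fixed_line: "\<bar>fst y\<bar> \<le> infdist y fixed_line"
proof -
  have "\<bar>fst y\<bar> \<le> dist y p" if "p \<in> fixed_line" for p
  proof -
    have "fst p = 0" using that by (auto simp: fixed_line_def)
    then show ?thesis using dist_fst_le[of y p] by (simp add: dist_real_def)
  qed
  then show ?thesis
    using infdist_notempty[of fixed_line y] by (auto simp: fixed_line_def intro!: cINF_greatest)
qed

(* Scale the mode so that it starts within delta of L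
   and reaches theta1 = h after n periods. *)
lemma growing_mode_unstable:
  fixes F :: "state \<Rightarrow> state" and h :: real
  assumes growth: "Re \<mu> > 0" and "h > 0"
    and solves: "\<And>C t T. 0 \<le> C \<Longrightarrow> 0 \<le> t \<Longrightarrow> t \<le> T \<Longrightarrow> C * exp (Re \<mu> * T) \<le> h \<Longrightarrow>
       ((\<lambda>s. C *\<^sub>R sym_mode \<mu> V s) has_vector_derivative F (C *\<^sub>R sym_mode \<mu> V t)) (at t within {0..T})"
  shows "\<not> lyapunov_stable_set F fixed_line"
proof
  assume "lyapunov_stable_set F fixed_line"
  then obtain \<delta> where "\<delta> > 0" and stable: "\<And>y0 T y. infdist y0 fixed_line < \<delta> \<Longrightarrow> is_solution F y0 T y \<Longrightarrow>
      \<forall>t\<in>{0..T}. infdist (y t) fixed_line < h"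
    using \<open>h > 0\<close> unfolding lyapunov_stable_set_def by metis
  obtain \<tau> where "\<tau> > 0"
    and period: "\<And>n::nat. exp (of_real (real n * \<tau>) * \<mu>) = of_real (exp (Re \<mu> * (real n * \<tau>)))"
    using exp_period by blast
  define p0 :: state where "p0 = (0, 0, 0, 0, Re V, 0, Re V, 0)"
  define K where "K = dist (sym_mode \<mu> V 0) p0 + 1"
  obtain n :: nat where "h * K / \<delta> < real n * (Re \<mu> * \<tau>)"
    using ex_less_of_nat_mult[of "Re \<mu> * \<tau>"] growth \<open>\<tau> > 0\<close> by auto
  define T where "T = real n * \<tau>"
  define C where "C = h / exp (Re \<mu> * T)"
  have "T \<ge> 0" "C > 0" using \<open>\<tau> > 0\<close> \<open>h > 0\<close> by (simp_all add: T_def C_def)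
  have C_exp: "C * exp (Re \<mu> * T) = h" by (simp add: C_def)
  have "h * K / \<delta> < exp (Re \<mu> * T)"
    using \<open>h * K / \<delta> < _\<close> exp_gt_self[of "Re \<mu> * T"] by (simp add: T_def mult_ac)
  then have "C * K < \<delta>" using \<open>\<delta> > 0\<close> by (simp add: C_def field_simps)
  define y where "y s = C *\<^sub>R sym_mode \<mu> V s" for s
  have sol: "is_solution F (y 0) T y"
    unfolding is_solution_def y_def using solves \<open>T \<ge> 0\<close> \<open>C > 0\<close> C_exp by auto
  have "infdist (y 0) fixed_line \<le> dist (y 0) (C *\<^sub>R p0)"
    by (rule infdist_le) (auto simp: p0_def fixed_line_def)
  also have "\<dots> = C * dist (sym_mode \<mu> V 0) p0"
    using \<open>C > 0\<close> by (simp add: y_def dist_norm flip: scaleR_diff_right)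
  also have "\<dots> < \<delta>" using \<open>C * K < \<delta>\<close> \<open>C > 0\<close> by (simp add: K_def algebra_simps)
  finally have "infdist (y T) fixed_line < h"
    using stable[OF _ sol] \<open>T \<ge> 0\<close> by auto
  moreover have "fst (y T) = h"
    using period[of n] C_exp by (simp add: y_def sym_mode_def mode_def T_def)
  ultimately show False using abs_fst_le_infdist_fixed_line[of "y T"] by simp
qed

(* The main result, with rho0 = lam (M + m) / (m l); for (S) the escaping solutions are
   taken with amplitude at most tht / 2, inside the region where (S) is linear. *)
theorem proposition2:
  fixes lam M l m g k tht :: real
  assumes "lam > 0" "M > 0" "l > 0" "m > 0" "g > 0" "k > 0" "tht > 0"
  shows "\<exists>rho0>0. \<forall>rho. 0 < rho \<and> rho < rho0 \<longrightarrow>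
           fixed_points (linQ lam M l m g k rho) = fixed_line \<and>
           fixed_points (sysS lam tht M l m g k rho) = fixed_line \<and>
           \<not> lyapunov_stable_set (linQ lam M l m g k rho) fixed_line \<and>
           \<not> lyapunov_stable_set (sysS lam tht M l m g k rho) fixed_line"
proof (intro exI[of _ "lam * (M + m) / (m * l)"] conjI allI impI)
  show "lam * (M + m) / (m * l) > 0" using assms by simp
  fix rho assume rho: "0 < rho \<and> rho < lam * (M + m) / (m * l)"
  show lin_fixed: "fixed_points (linQ lam M l m g k rho) = fixed_line"
    using assms by (simp add: fixed_points_linQ)
  then show "fixed_points (sysS lam tht M l m g k rho) = fixed_line"
    by (simp add: fixed_points_sysS)
  obtain \<mu> V where "Re \<mu> > 0" and char: "\<mu> * \<mu> = of_real (- (g / l) * (1 + m / M))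
      + of_real (2 * lam * (1 / (M * l) + 1 / (m * l))) * \<mu> + of_real (2 * rho / (M * l)) * (V * \<mu>)"
      "V * \<mu> * \<mu> = of_real (m * g / M) - of_real (2 * lam / M) * \<mu> - of_real (2 * rho / M) * (V * \<mu>)"
    using growing_eigenpair[of lam M l m g rho] assms rho by blast
  show "\<not> lyapunov_stable_set (linQ lam M l m g k rho) fixed_line"
    using \<open>Re \<mu> > 0\<close> sym_mode_solves_linQ[OF char]
    by (intro growing_mode_unstable[where h = 1]) auto
  show "\<not> lyapunov_stable_set (sysS lam tht M l m g k rho) fixed_line"
  proof (rule growing_mode_unstable[OF \<open>Re \<mu> > 0\<close>, where h = "tht / 2"])
    fix C t T :: real
    assume "0 \<le> C" "0 \<le> t" "t \<le> T" "C * exp (Re \<mu> * T) \<le> tht / 2"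
    moreover have "C * exp (Re \<mu> * t) \<le> C * exp (Re \<mu> * T)"
      using \<open>0 \<le> C\<close> \<open>t \<le> T\<close> \<open>Re \<mu> > 0\<close> by (simp add: mult_left_mono)
    ultimately show "((\<lambda>s. C *\<^sub>R sym_mode \<mu> V s) has_vector_derivative
        sysS lam tht M l m g k rho (C *\<^sub>R sym_mode \<mu> V t)) (at t within {0..T})"
      using \<open>tht > 0\<close> by (intro sym_mode_solves_sysS[OF char]) auto
  qed (use \<open>tht > 0\<close> in simp)
qed

end
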